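(* Let $T$ be a decomposition tree of a distance-hereditary graph $G$, and let $v$ be an internal node of $T$ labeled $\otimes$ with left child $v_l$ and right child $v_r$, such that property (P) holds at $v_l$ and at $v_r$. Then $$\hat\alpha(v)=\begin{cases}\hat\alpha(v_l)-\hat\beta(v_r) & \text{if } \hat\alpha(v_l)>\hat\beta(v_r),\\ \hat\alpha(v_r)-\hat\beta(v_l) & \text{if } \hat\alpha(v_r)>\hat\beta(v_l),\\ |\hat\alpha(v_l)-\hat\alpha(v_r)| \bmod 2 & \text{otherwise.}\end{cases}$$
   Context: All graphs are finite, simple, undirected. For a graph $H$ and $S\subseteq V(H)$, $N_H[S]$ is $S$ together with all vertices adjacent to a vertex of $S$, and $H[S]$ is the induced subgraph. Graphs carry a "twin set": a single-vertex graph on $x$ has twin set $\{x\}$. For vertex-disjoint graphs $G_l,G_r$ with twin sets $TS(G_l),TS(G_r)$: the true twin operation $G_l\otimes G_r$ has vertex set $V(G_l)\cup V(G_r)$, edge set $E(G_l)\cup E(G_r)\cup\{uw: u\in TS(G_l), w\in TS(G_r)\}$ and twin set $TS(G_l)\cup TS(G_r)$; the false twin operation $G_l\odot G_r$ has vertex set $V(G_l)\cup V(G_r)$, edge set $E(G_l)\cup E(G_r)$, twin set $TS(G_l)\cup TS(G_r)$; the attachment operation $G_l\oplus G_r$ has the same vertex and edge sets as $G_l\otimes G_r$ and twin set $TS(G_l)$. A decomposition tree $T$ of $G$ is a rooted binary tree whose leaves are in bijection with $V(G)$, each internal node having a left and a right child and a label in $\{\otimes,\odot,\oplus\}$; for each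 node $v$ define $\hat G(v)$ and $\hat{TS}(v)$ recursively: for a leaf $x$, the single-vertex graph on $x$ with twin set $\{x\}$; for an internal node $v$ with label $\circ$ and children $v_l,v_r$, $\hat G(v)=\hat G(v_l)\circ\hat G(v_r)$ with the corresponding twin set; one requires $\hat G(\text{root})=G$. Then $\hat G(v)$ is the subgraph of $G$ induced by the set $\hat V(v)$ of leaves below $v$. For a node $u$ and $0\le k\le|\hat{TS}(u)|$, call $S\subseteq\hat V(u)$ $k$-feasible if $\hat V(u)\setminus\hat{TS}(u)\subseteq N_{\hat G(u)}[S]$ and there is $X\subseteq S\cap\hat{TS}(u)$ with $|X|=k$ such that $\hat G(u)[S\setminus X]$ has a perfect matching. $\hat\gamma_k(u)$ is the minimum size of a $k$-feasible set. $\hat{min}(u)=\min\{\hat\gamma_k(u):0\le k\le|\hat{TS}(u)|\}$, and $\hat\alpha(u)$, $\hat\beta(u)$ are the smallest and the largest $k$ with $\hat\gamma_k(u)=\hat{min}(u)$. Property (P) holds at $u$ if for every $0\le k\le|\hat{TS}(u)|$: $\hat\gamma_k(u)=\hat{min}(u)+\hat\alpha(u)-k$ when $k\le\hat\alpha(u)$; $\hat\gamma_k(u)=\hat{min}(u)+k-\hat\beta(u)$ when $k\ge\hat\beta(u)$; $\hat\gamma_k(u)=\hat{min}(u)$ when $\hat\alpha(u)<k<\hat\beta(u)$ and $k-\hat\alpha(u)$ is even; and $\hat\gamma_k(u)=\hat{min}(u)+1$ otherwise. *)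

theory Defs
  imports Main "HOL-Library.Extended_Nat"
begin

definition path_in :: "'a set \<Rightarrow> 'a set set \<Rightarrow> 'a list \<Rightarrow> bool" where
  "path_in V E xs \<longleftrightarrow> xs \<noteq> [] \<and> set xs \<subseteq> V \<and>
     (\<forall>i. Suc i < length xs \<longrightarrow> {xs ! i, xs ! Suc i} \<in> E)"

text \<open>Distance in the graph (V, E) restricted to V (infinite if unreachable).\<close>
definition gdist :: "'a set \<Rightarrow> 'a set set \<Rightarrow> 'a \<Rightarrow> 'a \<Rightarrow> enat" where
  "gdist V E u w = (INF xs \<in> {xs. path_in V E xs \<and> hd xs = u \<and> last xs = w}.
                       enat (length xs - 1))"

definition gconnected :: "'a set \<Rightarrow> 'a set set \<Rightarrow> bool" where
  "gconnected V E \<longleftrightarrow> (\<forall>u\<in>V. \<forall>w\<in>V. \<exists>xs. path_in V E xs \<and> hd xs = u \<and> last xs = w)"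

text \<open>Distance-hereditary: every connected induced subgraph preserves distances.
  Paths in (S, E) only use vertices of S, so they are paths of the induced subgraph.\<close>
definition distance_hereditary :: "'a set \<Rightarrow> 'a set set \<Rightarrow> bool" where
  "distance_hereditary V E \<longleftrightarrow>
     (\<forall>S\<subseteq>V. S \<noteq> {} \<longrightarrow> gconnected S E \<longrightarrow> (\<forall>u\<in>S. \<forall>w\<in>S. gdist S E u w = gdist V E u w))"

definition cnbh :: "'a set \<Rightarrow> 'a set set \<Rightarrow> 'a set \<Rightarrow> 'a set" where
  "cnbh V E S = S \<union> {w\<in>V. \<exists>u\<in>S. {u, w} \<in> E}"

definition has_perfect_matching :: "'a set set \<Rightarrow> 'a set \<Rightarrow> bool" where
  "has_perfect_matching E S \<longleftrightarrow>
     (\<exists>M\<subseteq>E. (\<forall>e\<in>M. e \<subseteq> S) \<and> (\<forall>x\<in>S. \<exists>!e. e \<in> M \<and> x \<in> e))"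

datatype op = TrueTwin | FalseTwin | Attach

datatype 'a dtree = Leaf 'a | Node op "'a dtree" "'a dtree"

fun leaf_list :: "'a dtree \<Rightarrow> 'a list" where
  "leaf_list (Leaf x) = [x]"
| "leaf_list (Node _ l r) = leaf_list l @ leaf_list r"

definition hatV :: "'a dtree \<Rightarrow> 'a set" where
  "hatV t = set (leaf_list t)"

fun hatTS :: "'a dtree \<Rightarrow> 'a set" where
  "hatTS (Leaf x) = {x}"
| "hatTS (Node TrueTwin l r) = hatTS l \<union> hatTS r"
| "hatTS (Node FalseTwin l r) = hatTS l \<union> hatTS r"
| "hatTS (Node Attach l r) = hatTS l"

fun hatE :: "'a dtree \<Rightarrow> 'a set set" where
  "hatE (Leaf x) = {}"
| "hatE (Node FalseTwin l r) = hatE l \<union> hatE r"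
| "hatE (Node TrueTwin l r) = hatE l \<union> hatE r \<union> {{u, w} | u w. u \<in> hatTS l \<and> w \<in> hatTS r}"
| "hatE (Node Attach l r) = hatE l \<union> hatE r \<union> {{u, w} | u w. u \<in> hatTS l \<and> w \<in> hatTS r}"

fun subtrees :: "'a dtree \<Rightarrow> 'a dtree set" where
  "subtrees (Leaf x) = {Leaf x}"
| "subtrees (Node c l r) = insert (Node c l r) (subtrees l \<union> subtrees r)"

text \<open>T is a decomposition tree of G = (V, E): leaves in bijection with V, and hat G(root) = G.\<close>
definition decomposition_tree :: "'a dtree \<Rightarrow> 'a set \<Rightarrow> 'a set set \<Rightarrow> bool" where
  "decomposition_tree T V E \<longleftrightarrow> distinct (leaf_list T) \<and> hatV T = V \<and> hatE T = E"

definition k_feasible :: "'a dtree \<Rightarrow> nat \<Rightarrow> 'a set \<Rightarrow> bool" where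
  "k_feasible u k S \<longleftrightarrow> S \<subseteq> hatV u \<and>
     hatV u - hatTS u \<subseteq> cnbh (hatV u) (hatE u) S \<and>
     (\<exists>X. X \<subseteq> S \<inter> hatTS u \<and> card X = k \<and> has_perfect_matching (hatE u) (S - X))"

text \<open>Minimum size of a k-feasible set (infinity if there is none).\<close>
definition gamma_hat :: "'a dtree \<Rightarrow> nat \<Rightarrow> enat" where
  "gamma_hat u k = (INF S \<in> {S. k_feasible u k S}. enat (card S))"

definition min_hat :: "'a dtree \<Rightarrow> enat" where
  "min_hat u = Min (gamma_hat u ` {0..card (hatTS u)})"

definition alpha_hat :: "'a dtree \<Rightarrow> nat" where
  "alpha_hat u = Min {k. k \<le> card (hatTS u) \<and> gamma_hat u k = min_hat u}"

definition beta_hat :: "'a dtree \<Rightarrow> nat" where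
  "beta_hat u = Max {k. k \<le> card (hatTS u) \<and> gamma_hat u k = min_hat u}"

definition property_P :: "'a dtree \<Rightarrow> bool" where
  "property_P u \<longleftrightarrow> (\<forall>k\<le>card (hatTS u).
     (k \<le> alpha_hat u \<longrightarrow> gamma_hat u k = min_hat u + enat (alpha_hat u - k)) \<and>
     (k \<ge> beta_hat u \<longrightarrow> gamma_hat u k = min_hat u + enat (k - beta_hat u)) \<and>
     (alpha_hat u < k \<and> k < beta_hat u \<longrightarrow>
        gamma_hat u k = (if even (k - alpha_hat u) then min_hat u else min_hat u + 1)))"

end

theory Submission
  imports Defs
begin

text \<open>At a true-twin node every vertex of \<open>TS(v_l)\<close> is adjacent to every vertex of
  \<open>TS(v_r)\<close>. Hence a \<open>k_l\<close>-feasible set of \<open>v_l\<close> and a \<open>k_r\<close>-feasible set of \<open>v_r\<close>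
  combine into a \<open>|k_l - k_r|\<close>-feasible set of \<open>v\<close>, by matching \<open>min k_l k_r\<close> of the
  unmatched twin vertices across the join. Conversely, a \<open>k\<close>-feasible set of \<open>v\<close> restricts
  to an \<open>(a + c)\<close>-feasible set of \<open>v_l\<close> and a \<open>(b + c)\<close>-feasible set of \<open>v_r\<close> with
  \<open>k = a + b\<close>, where \<open>c\<close> counts the matching edges across the join, whose endpoints become
  unmatched. So \<open>min(v) = min(v_l) + min(v_r)\<close> and \<open>\<alpha>(v)\<close> is the least \<open>|k_l - k_r|\<close>
  over optimal \<open>k_l\<close>, \<open>k_r\<close>. A perfect matching has even size, so \<open>\<gamma>_k(u) - k\<close> is
  even; together with property (P) this makes the optimal \<open>k\<close> at a child exactly
  \<open>\<alpha>, \<alpha> + 2, \<dots>, \<beta>\<close>, and the distance between two such progressions is the stated formula.\<close>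

section \<open>Perfect matchings\<close>

definition simple_edges :: "'a set \<Rightarrow> 'a set set \<Rightarrow> bool" where
  "simple_edges V E \<longleftrightarrow> (\<forall>e\<in>E. e \<subseteq> V \<and> card e = 2)"

lemma simple_edges_mono: "simple_edges V E \<Longrightarrow> V \<subseteq> V' \<Longrightarrow> simple_edges V' E"
  unfolding simple_edges_def by blast

lemma simple_edges_Un: "simple_edges V E \<Longrightarrow> simple_edges V E' \<Longrightarrow> simple_edges V (E \<union> E')"
  unfolding simple_edges_def by blast

lemma simple_edges_nonempty: "simple_edges V E \<Longrightarrow> e \<in> E \<Longrightarrow> e \<noteq> {}"
  unfolding simple_edges_def by fastforce

lemma cnbh_mono: "V \<subseteq> V' \<Longrightarrow> E \<subseteq> E' \<Longrightarrow> S \<subseteq> S' \<Longrightarrow> cnbh V E S \<subseteq> cnbh V' E' S'"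
  unfolding cnbh_def by blast

definition perfect_matching :: "'a set set \<Rightarrow> 'a set \<Rightarrow> 'a set set \<Rightarrow> bool" where
  "perfect_matching E S M \<longleftrightarrow> M \<subseteq> E \<and> pairwise disjnt M \<and> \<Union>M = S"

lemma has_perfect_matching_iff: "has_perfect_matching E S \<longleftrightarrow> (\<exists>M. perfect_matching E S M)"
proof
  assume "has_perfect_matching E S"
  then obtain M where M: "M \<subseteq> E" "\<forall>e\<in>M. e \<subseteq> S" "\<forall>x\<in>S. \<exists>!e. e \<in> M \<and> x \<in> e"
    unfolding has_perfect_matching_def by blast
  \<comment> \<open>The \<open>\<exists>!\<close> formulation allows \<open>{}\<close> as a member of \<open>M\<close>; it has to be dropped.\<close>
  have "pairwise disjnt (M - {{}})"
    unfolding pairwise_def disjnt_def using M(2,3) by blast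
  moreover have "\<Union>(M - {{}}) = S"
    using M(2,3) by blast
  ultimately show "\<exists>M. perfect_matching E S M"
    using M(1) unfolding perfect_matching_def by blast
next
  assume "\<exists>M. perfect_matching E S M"
  then obtain M where "M \<subseteq> E" "pairwise disjnt M" "\<Union>M = S"
    unfolding perfect_matching_def by blast
  then show "has_perfect_matching E S"
    unfolding has_perfect_matching_def pairwise_def disjnt_def by blast
qed

lemma perfect_matching_mono: "perfect_matching E S M \<Longrightarrow> M \<subseteq> E' \<Longrightarrow> perfect_matching E' S M"
  unfolding perfect_matching_def by blast

lemma perfect_matching_Un:
  assumes "perfect_matching E S M" "perfect_matching E' S' M'" "S \<inter> S' = {}"
  shows "perfect_matching (E \<union> E') (S \<union> S') (M \<union> M')"
proof -
  have "disjnt e e'" if "e \<in> M" "e' \<in> M'" for e e'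
    using that assms unfolding perfect_matching_def disjnt_def by blast
  then have "pairwise disjnt (M \<union> M')"
    using assms unfolding perfect_matching_def pairwise_def by (metis UnE disjnt_sym)
  then show ?thesis
    using assms unfolding perfect_matching_def by blast
qed

lemma pairwise_disjnt_unique:
  "pairwise disjnt M \<Longrightarrow> e \<in> M \<Longrightarrow> e' \<in> M \<Longrightarrow> x \<in> e \<Longrightarrow> x \<in> e' \<Longrightarrow> e = e'"
  by (meson disjnt_iff pairwiseD)

lemma perfect_matching_Diff:
  assumes "perfect_matching E S M"
  shows "perfect_matching E (S - \<Union>(M \<inter> F)) (M - F)"
proof -
  have M: "M \<subseteq> E" "pairwise disjnt M" "\<Union>M = S"
    using assms unfolding perfect_matching_def by blast+
  have "\<Union>(M - F) = S - \<Union>(M \<inter> F)"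
    using M(3) pairwise_disjnt_unique[OF M(2)] by blast
  then show ?thesis
    using M(1,2) unfolding perfect_matching_def by (blast intro: pairwise_subset)
qed

lemma perfect_matching_restrict:
  assumes "perfect_matching E S M" "\<And>e. e \<in> M \<Longrightarrow> e \<subseteq> A \<or> e \<inter> A = {}"
  shows "perfect_matching E (S \<inter> A) {e\<in>M. e \<subseteq> A}"
proof -
  have M: "M \<subseteq> E" "pairwise disjnt M" "\<Union>M = S"
    using assms(1) unfolding perfect_matching_def by blast+
  have "\<Union>{e\<in>M. e \<subseteq> A} = S \<inter> A"
    using M(3) assms(2) by blast
  then show ?thesis
    using M(1,2) unfolding perfect_matching_def by (blast intro: pairwise_subset)
qed

lemma perfect_matching_pairs:
  assumes "bij_betw g A B" "A \<inter> B = {}"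
  shows "perfect_matching ((\<lambda>x. {x, g x}) ` A) (A \<union> B) ((\<lambda>x. {x, g x}) ` A)"
proof -
  have "g a \<in> B" if "a \<in> A" for a
    using assms(1) that by (rule bij_betw_apply)
  moreover have "g a \<noteq> g a'" if "a \<in> A" "a' \<in> A" "a \<noteq> a'" for a a'
    using assms(1) that unfolding bij_betw_def inj_on_def by blast
  ultimately have "pairwise disjnt ((\<lambda>x. {x, g x}) ` A)"
    using assms(2) unfolding pairwise_def disjnt_def by auto
  moreover have "\<Union>((\<lambda>x. {x, g x}) ` A) = A \<union> B"
    using assms(1) unfolding bij_betw_def by blast
  ultimately show ?thesis
    unfolding perfect_matching_def by blast
qed

lemma even_card_perfect_matching:
  assumes "simple_edges V E" "perfect_matching E S M" "finite S"
  shows "even (card S)"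
proof -
  have M: "M \<subseteq> E" "pairwise disjnt M" "\<Union>M = S"
    using assms(2) unfolding perfect_matching_def by blast+
  have fin: "finite e" if "e \<in> M" for e
    using M(3) assms(3) that by (meson Union_upper finite_subset)
  have "card S = sum card M"
    using card_Union_disjoint[OF M(2) fin] M(3) by simp
  also have "\<dots> = (\<Sum>e\<in>M. 2)"
    using M(1) assms(1) unfolding simple_edges_def by (intro sum.cong) auto
  finally show ?thesis by simp
qed

section \<open>Feasible sets\<close>

definition twin_feasible :: "'a set \<Rightarrow> 'a set set \<Rightarrow> 'a set \<Rightarrow> nat \<Rightarrow> 'a set \<Rightarrow> bool" where
  "twin_feasible V E T k S \<longleftrightarrow> S \<subseteq> V \<and> V - T \<subseteq> cnbh V E S \<and>
     (\<exists>X M. X \<subseteq> S \<inter> T \<and> card X = k \<and> perfect_matching E (S - X) M)"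

lemma k_feasible_iff_twin_feasible:
  "k_feasible u k S \<longleftrightarrow> twin_feasible (hatV u) (hatE u) (hatTS u) k S"
  by (simp add: k_feasible_def twin_feasible_def has_perfect_matching_iff)

lemma twin_feasible_card:
  assumes "twin_feasible V E T k S" "finite V" "simple_edges V E"
  shows "k \<le> card S \<and> even (card S - k)"
proof -
  obtain X M where "S \<subseteq> V" "X \<subseteq> S" "card X = k" "perfect_matching E (S - X) M"
    using assms(1) unfolding twin_feasible_def by blast
  moreover have "finite S"
    using \<open>S \<subseteq> V\<close> assms(2) by (rule finite_subset)
  ultimately show ?thesis
    using even_card_perfect_matching[OF assms(3)] by (metis card_Diff_subset card_mono finite_Diff finite_subset)
qed

lemma twin_feasible_le_card:
  assumes "twin_feasible V E T k S" "finite T"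
  shows "k \<le> card T"
  using assms unfolding twin_feasible_def by (metis card_mono le_inf_iff)

lemma twin_feasible_exists:
  assumes "finite V" "simple_edges V E" "T \<subseteq> V"
    and neighbour: "\<And>x. x \<in> V - T \<Longrightarrow> \<exists>y. {x, y} \<in> E"
  shows "\<exists>k S. twin_feasible V E T k S"
proof -
  \<comment> \<open>Take \<open>S = \<Union>M \<union> T\<close> for a maximal matching \<open>M\<close>: a vertex outside \<open>T\<close> not covered by
    \<open>M\<close> has a neighbour, which is covered since otherwise \<open>M\<close> could be extended.\<close>
  let ?matchings = "{M. M \<subseteq> E \<and> pairwise disjnt M}"
  have "E \<subseteq> Pow V"
    using assms(2) unfolding simple_edges_def by blast
  then have "finite E"
    using assms(1) by (meson finite_Pow_iff finite_subset)
  then have fin: "finite ?matchings"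
    by (intro finite_subset[of ?matchings "Pow E"]) auto
  have "{} \<in> ?matchings"
    by simp
  then have nonempty: "?matchings \<noteq> {}"
    by blast
  from finite_has_maximal[OF fin nonempty]
  obtain M where "M \<in> ?matchings" and maximal: "\<forall>M'\<in>?matchings. M \<le> M' \<longrightarrow> M = M'" ..
  then have M: "M \<subseteq> E" "pairwise disjnt M" by simp_all
  define S where "S = \<Union>M \<union> T"
  have "x \<in> cnbh V E S" if x: "x \<in> V - T" for x
  proof (cases "x \<in> \<Union>M")
    case False
    obtain y where y: "{x, y} \<in> E" using neighbour x by blast
    have "y \<in> \<Union>M"
    proof (rule ccontr)
      assume "y \<notin> \<Union>M"
      then have "\<forall>e\<in>M. disjnt {x, y} e \<and> disjnt e {x, y}"
        using False unfolding disjnt_def by blast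
      then have "insert {x, y} M \<in> ?matchings"
        using M y by (simp add: pairwise_insert)
      then have "M = insert {x, y} M"
        by (rule maximal[rule_format, OF _ subset_insertI])
      then show False
        using False by blast
    qed
    then have "{y, x} \<in> E" "y \<in> S"
      using y unfolding S_def by (simp_all add: insert_commute)
    then show ?thesis
      using x unfolding cnbh_def by blast
  qed (simp add: cnbh_def S_def)
  moreover have "perfect_matching E (S - (T - \<Union>M)) M"
    using M unfolding perfect_matching_def S_def by blast
  moreover have "S \<subseteq> V"
    using M \<open>E \<subseteq> Pow V\<close> assms(3) unfolding S_def by blast
  moreover have "T - \<Union>M \<subseteq> S \<inter> T"
    unfolding S_def by blast
  ultimately have "twin_feasible V E T (card (T - \<Union>M)) S"
    unfolding twin_feasible_def by blast
  then show ?thesis by blast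
qed

section \<open>The true-twin join\<close>

definition join_edges :: "'a set \<Rightarrow> 'a set \<Rightarrow> 'a set set" where
  "join_edges A B = {{u, w} | u w. u \<in> A \<and> w \<in> B}"

lemma join_edges_commute: "join_edges A B = join_edges B A"
  unfolding join_edges_def by (auto simp: insert_commute)

lemma join_edgesE:
  assumes "e \<in> join_edges A B"
  obtains u w where "e = {u, w}" "u \<in> A" "w \<in> B"
  using assms unfolding join_edges_def by blast

lemma simple_edges_join_edges: "A \<inter> B = {} \<Longrightarrow> simple_edges (A \<union> B) (join_edges A B)"
  unfolding simple_edges_def by (auto elim!: join_edgesE simp: card_insert_if)

locale true_twin_join =
  fixes V1 :: "'a set" and E1 :: "'a set set" and T1 :: "'a set"
    and V2 :: "'a set" and E2 :: "'a set set" and T2 :: "'a set"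
  assumes finite_V1: "finite V1" and finite_V2: "finite V2"
    and edges1: "simple_edges V1 E1" and edges2: "simple_edges V2 E2"
    and T1_subset: "T1 \<subseteq> V1" and T2_subset: "T2 \<subseteq> V2"
    and disjoint: "V1 \<inter> V2 = {}"
begin

lemma join_edge_meets_V1:
  assumes "e \<in> join_edges T1 T2"
  shows "\<exists>u\<in>T1. e \<inter> V1 = {u}"
proof -
  obtain u w where "e = {u, w}" "u \<in> T1" "w \<in> T2"
    using assms by (rule join_edgesE)
  then have "e \<inter> V1 = {u}"
    using T1_subset T2_subset disjoint by blast
  then show ?thesis
    using \<open>u \<in> T1\<close> by blast
qed

lemma card_Union_join_edges_Int_V1:
  assumes "C \<subseteq> join_edges T1 T2" "pairwise disjnt C" "finite C"
  shows "card (\<Union>C \<inter> V1) = card C"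
proof -
  have one: "card (e \<inter> V1) = 1" if "e \<in> C" for e
    using join_edge_meets_V1 assms(1) that by fastforce
  have "\<Union>C \<inter> V1 = (\<Union>e\<in>C. e \<inter> V1)"
    by blast
  also have "card \<dots> = (\<Sum>e\<in>C. card (e \<inter> V1))"
    using assms(2,3) finite_V1 by (intro card_UN_disjoint) (auto simp: pairwise_def disjnt_def)
  also have "\<dots> = card C"
    using one by simp
  finally show ?thesis .
qed

abbreviation "V \<equiv> V1 \<union> V2"
abbreviation "E \<equiv> E1 \<union> E2 \<union> join_edges T1 T2"
abbreviation "T \<equiv> T1 \<union> T2"

lemma dominated_restrict_V1:
  assumes "V - T \<subseteq> cnbh V E S" "S \<subseteq> V"
  shows "V1 - T1 \<subseteq> cnbh V1 E1 (S \<inter> V1)"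
proof
  fix x assume x: "x \<in> V1 - T1"
  then have "x \<notin> V2" "x \<notin> T"
    using disjoint T2_subset by blast+
  then obtain u where "u \<in> S" "{u, x} \<in> E \<or> u = x"
    using assms(1) x unfolding cnbh_def by blast
  moreover have "{u, x} \<notin> E2"
    using edges2 \<open>x \<notin> V2\<close> unfolding simple_edges_def by blast
  moreover have "{u, x} \<notin> join_edges T1 T2"
    using \<open>x \<notin> T\<close> by (auto elim!: join_edgesE simp: doubleton_eq_iff)
  ultimately have "u \<in> S" "{u, x} \<in> E1 \<or> u = x"
    by blast+
  moreover have "{u, x} \<in> E1 \<Longrightarrow> u \<in> V1"
    using edges1 unfolding simple_edges_def by blast
  ultimately show "x \<in> cnbh V1 E1 (S \<inter> V1)"
    using x unfolding cnbh_def by blast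
qed

lemma perfect_matching_restrict_V1:
  assumes "perfect_matching E R M"
  shows "perfect_matching E1 (R \<inter> V1 - \<Union>(M \<inter> join_edges T1 T2)) {e \<in> M - join_edges T1 T2. e \<subseteq> V1}"
proof -
  have "M \<subseteq> E"
    using assms unfolding perfect_matching_def by blast
  have "e \<subseteq> V1 \<or> e \<inter> V1 = {}" if "e \<in> M - join_edges T1 T2" for e
    using that \<open>M \<subseteq> E\<close> edges1 edges2 disjoint unfolding simple_edges_def by blast
  with perfect_matching_Diff[OF assms]
  have "perfect_matching E ((R - \<Union>(M \<inter> join_edges T1 T2)) \<inter> V1) {e \<in> M - join_edges T1 T2. e \<subseteq> V1}"
    by (rule perfect_matching_restrict)
  moreover have "{e \<in> M - join_edges T1 T2. e \<subseteq> V1} \<subseteq> E1"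
  proof
    fix e assume e: "e \<in> {e \<in> M - join_edges T1 T2. e \<subseteq> V1}"
    then have "e \<notin> E2"
      using simple_edges_nonempty[OF edges2] edges2 disjoint unfolding simple_edges_def by blast
    then show "e \<in> E1"
      using e \<open>M \<subseteq> E\<close> by blast
  qed
  ultimately have "perfect_matching E1 ((R - \<Union>(M \<inter> join_edges T1 T2)) \<inter> V1) {e \<in> M - join_edges T1 T2. e \<subseteq> V1}"
    by (rule perfect_matching_mono)
  moreover have "(R - \<Union>(M \<inter> join_edges T1 T2)) \<inter> V1 = R \<inter> V1 - \<Union>(M \<inter> join_edges T1 T2)"
    by blast
  ultimately show ?thesis
    by simp
qed

lemma twin_feasible_restrict_V1:
  assumes "S \<subseteq> V" "V - T \<subseteq> cnbh V E S" "X \<subseteq> S \<inter> T" "perfect_matching E (S - X) M"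
  shows "twin_feasible V1 E1 T1 (card (X \<inter> V1) + card (M \<inter> join_edges T1 T2)) (S \<inter> V1)"
proof -
  \<comment> \<open>The endpoints in \<open>V1\<close> of the matching edges across the join become unmatched.\<close>
  define C where "C = M \<inter> join_edges T1 T2"
  define Y where "Y = X \<inter> V1 \<union> \<Union>C \<inter> V1"
  have M: "pairwise disjnt M" "\<Union>M = S - X"
    using assms(4) unfolding perfect_matching_def by blast+
  have "finite C"
    using M(2) assms(1) finite_V1 finite_V2
    by (metis C_def Int_lower1 finite_Diff finite_UnI finite_UnionD finite_subset)
  have C_T1: "\<Union>C \<inter> V1 \<subseteq> T1"
  proof
    fix x assume "x \<in> \<Union>C \<inter> V1"
    then obtain e where "e \<in> join_edges T1 T2" "x \<in> e \<inter> V1"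
      unfolding C_def by blast
    moreover obtain u where "u \<in> T1" "e \<inter> V1 = {u}"
      using join_edge_meets_V1[OF calculation(1)] by blast
    ultimately show "x \<in> T1"
      by simp
  qed
  have card_Y: "card Y = card (X \<inter> V1) + card C"
  proof -
    have "card (\<Union>C \<inter> V1) = card C"
      using M(1) \<open>finite C\<close> unfolding C_def
      by (intro card_Union_join_edges_Int_V1) (auto intro: pairwise_subset)
    moreover have "X \<inter> (\<Union>C \<inter> V1) = {}"
      using M(2) unfolding C_def by blast
    ultimately show ?thesis
      unfolding Y_def using finite_V1 by (subst card_Un_disjoint) auto
  qed
  have "Y \<subseteq> S \<inter> V1 \<inter> T1"
    using assms(3) C_T1 M(2) T2_subset disjoint unfolding Y_def C_def by blast
  moreover have "(S - X) \<inter> V1 - \<Union>C = S \<inter> V1 - Y"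
    unfolding Y_def by blast
  then have "perfect_matching E1 (S \<inter> V1 - Y) {e \<in> M - join_edges T1 T2. e \<subseteq> V1}"
    using perfect_matching_restrict_V1[OF assms(4)] unfolding C_def by simp
  ultimately show ?thesis
    using dominated_restrict_V1[OF assms(2,1)] card_Y
    unfolding twin_feasible_def C_def by blast
qed

lemma swap_sides: "true_twin_join V2 E2 T2 V1 E1 T1"
  by unfold_locales (use finite_V1 finite_V2 edges1 edges2 T1_subset T2_subset disjoint in auto)

lemma twin_feasible_split:
  assumes "twin_feasible V E T k S"
  shows "\<exists>a b c. k = a + b \<and> twin_feasible V1 E1 T1 (a + c) (S \<inter> V1) \<and> twin_feasible V2 E2 T2 (b + c) (S \<inter> V2)"
proof -
  obtain X M where S: "S \<subseteq> V" "V - T \<subseteq> cnbh V E S"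
    and X: "X \<subseteq> S \<inter> T" "card X = k" and M: "perfect_matching E (S - X) M"
    using assms unfolding twin_feasible_def by blast
  interpret swapped: true_twin_join V2 E2 T2 V1 E1 T1
    by (rule swap_sides)
  have E_swap: "E2 \<union> E1 \<union> join_edges T2 T1 = E"
    using join_edges_commute by blast
  have "twin_feasible V1 E1 T1 (card (X \<inter> V1) + card (M \<inter> join_edges T1 T2)) (S \<inter> V1)"
    by (rule twin_feasible_restrict_V1[OF S X(1) M])
  moreover have "twin_feasible V2 E2 T2 (card (X \<inter> V2) + card (M \<inter> join_edges T1 T2)) (S \<inter> V2)"
    using swapped.twin_feasible_restrict_V1[of S X M] S X M
    unfolding E_swap join_edges_commute[of T2 T1] by (simp add: Un_commute)
  moreover have "k = card (X \<inter> V1) + card (X \<inter> V2)"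
  proof -
    have "X \<inter> V1 \<union> X \<inter> V2 = X"
      using X(1) S(1) by blast
    moreover have "card (X \<inter> V1 \<union> X \<inter> V2) = card (X \<inter> V1) + card (X \<inter> V2)"
      using finite_V1 finite_V2 disjoint by (intro card_Un_disjoint) auto
    ultimately show ?thesis
      using X(2) by simp
  qed
  ultimately show ?thesis
    by blast
qed

lemma perfect_matching_join:
  assumes "perfect_matching E1 R1 M1" "perfect_matching E2 R2 M2"
    and "R1 \<subseteq> V1" "R2 \<subseteq> V2" "A1 \<subseteq> T1 - R1" "A2 \<subseteq> T2 - R2" "bij_betw g A1 A2"
  shows "perfect_matching E (R1 \<union> R2 \<union> (A1 \<union> A2)) (M1 \<union> M2 \<union> (\<lambda>x. {x, g x}) ` A1)"
proof -
  have "A1 \<inter> A2 = {}"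
    using assms(5,6) T1_subset T2_subset disjoint by blast
  then have "perfect_matching (E1 \<union> E2 \<union> (\<lambda>x. {x, g x}) ` A1) (R1 \<union> R2 \<union> (A1 \<union> A2)) (M1 \<union> M2 \<union> (\<lambda>x. {x, g x}) ` A1)"
    using assms T1_subset T2_subset disjoint
    by (intro perfect_matching_Un perfect_matching_pairs) blast+
  moreover have "(\<lambda>x. {x, g x}) ` A1 \<subseteq> join_edges T1 T2"
    using assms(5,6) bij_betw_apply[OF assms(7)] unfolding join_edges_def by blast
  ultimately show ?thesis
    using assms(1,2) unfolding perfect_matching_def by blast
qed

lemma twin_feasible_combine:
  assumes "twin_feasible V1 E1 T1 k1 S1" "twin_feasible V2 E2 T2 k2 S2"
  shows "twin_feasible V E T (nat \<bar>int k1 - int k2\<bar>) (S1 \<union> S2)"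
proof -
  obtain X1 M1 where S1: "S1 \<subseteq> V1" "V1 - T1 \<subseteq> cnbh V1 E1 S1"
    and X1: "X1 \<subseteq> S1 \<inter> T1" "card X1 = k1" and M1: "perfect_matching E1 (S1 - X1) M1"
    using assms(1) unfolding twin_feasible_def by blast
  obtain X2 M2 where S2: "S2 \<subseteq> V2" "V2 - T2 \<subseteq> cnbh V2 E2 S2"
    and X2: "X2 \<subseteq> S2 \<inter> T2" "card X2 = k2" and M2: "perfect_matching E2 (S2 - X2) M2"
    using assms(2) unfolding twin_feasible_def by blast
  have fin: "finite X1" "finite X2"
    using X1(1) X2(1) S1(1) S2(1) finite_V1 finite_V2 by (meson finite_subset le_inf_iff)+
  \<comment> \<open>Match \<open>min k1 k2\<close> unmatched twin vertices of each side with each other across the join.\<close>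
  obtain A1 where A1: "A1 \<subseteq> X1" "card A1 = min k1 k2"
    using obtain_subset_with_card_n[of "min k1 k2" X1] X1(2) by auto
  obtain A2 where A2: "A2 \<subseteq> X2" "card A2 = min k1 k2"
    using obtain_subset_with_card_n[of "min k1 k2" X2] X2(2) by auto
  have "finite A1" "finite A2"
    using A1(1) A2(1) fin by (auto intro: finite_subset)
  then obtain g where g: "bij_betw g A1 A2"
    using finite_same_card_bij A1(2) A2(2) by metis
  define X where "X = (X1 - A1) \<union> (X2 - A2)"
  have "perfect_matching E ((S1 - X1) \<union> (S2 - X2) \<union> (A1 \<union> A2)) (M1 \<union> M2 \<union> (\<lambda>x. {x, g x}) ` A1)"
    by (rule perfect_matching_join[OF M1 M2]) (use A1(1) A2(1) X1(1) X2(1) S1(1) S2(1) g in blast)+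
  moreover have "(S1 - X1) \<union> (S2 - X2) \<union> (A1 \<union> A2) = S1 \<union> S2 - X"
    using A1(1) A2(1) X1(1) X2(1) S1(1) S2(1) disjoint unfolding X_def by blast
  ultimately have "perfect_matching E (S1 \<union> S2 - X) (M1 \<union> M2 \<union> (\<lambda>x. {x, g x}) ` A1)"
    by simp
  moreover have "card X = nat \<bar>int k1 - int k2\<bar>"
  proof -
    have "(X1 - A1) \<inter> (X2 - A2) = {}"
      using X1(1) X2(1) S1(1) S2(1) disjoint by blast
    then have "card X = card (X1 - A1) + card (X2 - A2)"
      unfolding X_def using fin by (simp add: card_Un_disjoint)
    then have "card X = (k1 - min k1 k2) + (k2 - min k1 k2)"
      using A1 A2 X1(2) X2(2) fin by (simp add: card_Diff_subset finite_subset)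
    then show ?thesis
      by linarith
  qed
  moreover have "V - T \<subseteq> cnbh V E (S1 \<union> S2)"
    using S1(2) S2(2) cnbh_mono[of V1 V E1 E S1 "S1 \<union> S2"] cnbh_mono[of V2 V E2 E S2 "S1 \<union> S2"]
    by blast
  moreover have "X \<subseteq> (S1 \<union> S2) \<inter> T"
    using X1(1) X2(1) unfolding X_def by blast
  ultimately show ?thesis
    unfolding twin_feasible_def using S1(1) S2(1) by blast
qed

end

lemma hatV_Node [simp]: "hatV (Node c l r) = hatV l \<union> hatV r"
  by (simp add: hatV_def)

lemma finite_hatV: "finite (hatV u)"
  by (simp add: hatV_def)

lemma hatTS_subset_hatV: "hatTS u \<subseteq> hatV u"
  by (induction u rule: hatTS.induct) (auto simp: hatV_def)

lemma finite_hatTS: "finite (hatTS u)"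
  using finite_hatV hatTS_subset_hatV by (rule finite_subset[rotated])

lemma hatTS_nonempty: "hatTS u \<noteq> {}"
  by (induction u rule: hatTS.induct) auto

lemma hatE_TrueTwin: "hatE (Node TrueTwin l r) = hatE l \<union> hatE r \<union> join_edges (hatTS l) (hatTS r)"
  by (simp add: join_edges_def)

lemma hatE_Node_subset: "hatE (Node c l r) \<subseteq> hatE l \<union> hatE r \<union> join_edges (hatTS l) (hatTS r)"
  by (cases c) (auto simp: join_edges_def)

lemma hatE_children_subset: "hatE l \<union> hatE r \<subseteq> hatE (Node c l r)"
  by (cases c) auto

lemma disjoint_hatV_children: "distinct (leaf_list (Node c l r)) \<Longrightarrow> hatV l \<inter> hatV r = {}"
  by (simp add: hatV_def)

lemma simple_edges_hatE: "distinct (leaf_list u) \<Longrightarrow> simple_edges (hatV u) (hatE u)"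
proof (induction u)
  case (Leaf x)
  then show ?case
    by (simp add: simple_edges_def)
next
  case (Node c l r)
  then have "simple_edges (hatV (Node c l r)) (hatE l)" "simple_edges (hatV (Node c l r)) (hatE r)"
    by (auto intro: simple_edges_mono)
  moreover have "simple_edges (hatV (Node c l r)) (join_edges (hatTS l) (hatTS r))"
    using disjoint_hatV_children[OF Node.prems] hatTS_subset_hatV[of l] hatTS_subset_hatV[of r]
    by (intro simple_edges_mono[OF simple_edges_join_edges]) auto
  ultimately have "simple_edges (hatV (Node c l r)) (hatE l \<union> hatE r \<union> join_edges (hatTS l) (hatTS r))"
    by (intro simple_edges_Un)
  then show ?case
    using hatE_Node_subset[of c l r] unfolding simple_edges_def by blast
qed

lemma neighbour_outside_hatTS: "x \<in> hatV u - hatTS u \<Longrightarrow> \<exists>y. {x, y} \<in> hatE u"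
proof (induction u)
  case (Leaf y)
  then show ?case
    by (simp add: hatV_def)
next
  case (Node c l r)
  show ?case
  proof (cases "x \<in> hatV l - hatTS l \<or> x \<in> hatV r - hatTS r")
    case True
    then show ?thesis
      using Node.IH hatE_children_subset by blast
  next
    case False
    then have "c = Attach" "x \<in> hatTS r"
      using Node.prems by (cases c; auto)+
    moreover obtain t where "t \<in> hatTS l"
      using hatTS_nonempty[of l] by blast
    ultimately have "{t, x} \<in> hatE (Node c l r)"
      by auto
    then show ?thesis
      by (metis insert_commute)
  qed
qed

lemma distinct_leaf_list_subtree: "t \<in> subtrees T \<Longrightarrow> distinct (leaf_list T) \<Longrightarrow> distinct (leaf_list t)"
  by (induction T) auto

lemma true_twin_join_children:
  assumes "distinct (leaf_list (Node c l r))"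
  shows "true_twin_join (hatV l) (hatE l) (hatTS l) (hatV r) (hatE r) (hatTS r)"
proof
  show "simple_edges (hatV l) (hatE l)" "simple_edges (hatV r) (hatE r)"
    using assms by (auto intro: simple_edges_hatE)
  show "hatV l \<inter> hatV r = {}"
    using assms by (rule disjoint_hatV_children)
qed (simp_all add: finite_hatV hatTS_subset_hatV)

lemma k_feasible_TrueTwin_iff:
  "k_feasible (Node TrueTwin l r) k S \<longleftrightarrow>
     twin_feasible (hatV l \<union> hatV r) (hatE l \<union> hatE r \<union> join_edges (hatTS l) (hatTS r)) (hatTS l \<union> hatTS r) k S"
  by (simp add: k_feasible_iff_twin_feasible hatE_TrueTwin del: hatE.simps)

section \<open>Optimal indices\<close>

lemma gamma_hat_le: "k_feasible u k S \<Longrightarrow> gamma_hat u k \<le> enat (card S)"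
  unfolding gamma_hat_def by (rule INF_lower) simp

lemma gamma_hat_attained:
  assumes "gamma_hat u k \<noteq> \<infinity>"
  obtains S where "k_feasible u k S" "gamma_hat u k = enat (card S)"
proof -
  have "{S. k_feasible u k S} \<noteq> {}"
  proof
    assume "{S. k_feasible u k S} = {}"
    then have "gamma_hat u k = top"
      unfolding gamma_hat_def by (simp only: image_empty Inf_empty)
    with assms show False
      by (simp add: top_enat_def)
  qed
  then obtain S0 where "k_feasible u k S0"
    by blast
  then have "gamma_hat u k \<in> (\<lambda>S. enat (card S)) ` {S. k_feasible u k S}"
    unfolding gamma_hat_def by (intro wellorder_InfI) blast
  then show ?thesis
    using that by blast
qed

lemma gamma_hat_parity:
  assumes "distinct (leaf_list u)" "gamma_hat u k = enat m"
  shows "k \<le> m \<and> even (m - k)"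
proof -
  have "gamma_hat u k \<noteq> \<infinity>"
    using assms(2) by simp
  then obtain S where "k_feasible u k S" "gamma_hat u k = enat (card S)"
    by (rule gamma_hat_attained)
  moreover from this(2) have "m = card S"
    using assms(2) by simp
  ultimately show ?thesis
    using twin_feasible_card finite_hatV simple_edges_hatE[OF assms(1)]
    unfolding k_feasible_iff_twin_feasible by blast
qed

lemma min_hat_le_gamma_hat: "k \<le> card (hatTS u) \<Longrightarrow> min_hat u \<le> gamma_hat u k"
  unfolding min_hat_def by (rule Min_le) auto

lemma min_hat_finite:
  assumes "distinct (leaf_list u)"
  shows "min_hat u \<noteq> \<infinity>"
proof -
  obtain k S where "twin_feasible (hatV u) (hatE u) (hatTS u) k S"
    using twin_feasible_exists[OF finite_hatV simple_edges_hatE[OF assms] hatTS_subset_hatV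
        neighbour_outside_hatTS] by blast
  then have "k \<le> card (hatTS u)" "gamma_hat u k \<le> enat (card S)"
    using twin_feasible_le_card finite_hatTS gamma_hat_le
    unfolding k_feasible_iff_twin_feasible by blast+
  then have "min_hat u \<le> enat (card S)"
    using min_hat_le_gamma_hat order_trans by blast
  then show ?thesis
    by (cases "min_hat u") simp_all
qed

definition gamma_argmin :: "'a dtree \<Rightarrow> nat set" where
  "gamma_argmin u = {k. k \<le> card (hatTS u) \<and> gamma_hat u k = min_hat u}"

lemma finite_gamma_argmin: "finite (gamma_argmin u)"
  unfolding gamma_argmin_def by simp

lemma gamma_argmin_nonempty: "gamma_argmin u \<noteq> {}"
proof -
  have "min_hat u \<in> gamma_hat u ` {0..card (hatTS u)}"
    unfolding min_hat_def by (rule Min_in) auto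
  then show ?thesis
    unfolding gamma_argmin_def by auto
qed

lemma alpha_hat_eq_Min: "alpha_hat u = Min (gamma_argmin u)"
  by (simp add: alpha_hat_def gamma_argmin_def)

lemma beta_hat_eq_Max: "beta_hat u = Max (gamma_argmin u)"
  by (simp add: beta_hat_def gamma_argmin_def)

lemma alpha_hat_mem_gamma_argmin: "alpha_hat u \<in> gamma_argmin u"
  unfolding alpha_hat_eq_Min using finite_gamma_argmin gamma_argmin_nonempty by (rule Min_in)

lemma beta_hat_mem_gamma_argmin: "beta_hat u \<in> gamma_argmin u"
  unfolding beta_hat_eq_Max using finite_gamma_argmin gamma_argmin_nonempty by (rule Max_in)

definition parity_interval :: "nat \<Rightarrow> nat \<Rightarrow> nat set" where
  "parity_interval a b = {k. a \<le> k \<and> k \<le> b \<and> even (k - a)}"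

lemma gamma_argmin_eq_parity_interval:
  assumes "distinct (leaf_list u)" "property_P u"
  shows "gamma_argmin u = parity_interval (alpha_hat u) (beta_hat u)"
proof (intro equalityI subsetI)
  fix k assume k: "k \<in> gamma_argmin u"
  obtain m where m: "min_hat u = enat m"
    using min_hat_finite[OF assms(1)] by auto
  have "k \<le> m \<and> even (m - k)" "alpha_hat u \<le> m \<and> even (m - alpha_hat u)"
    using k alpha_hat_mem_gamma_argmin[of u] gamma_hat_parity[OF assms(1)] m
    unfolding gamma_argmin_def by auto
  moreover have "alpha_hat u \<le> k"
    unfolding alpha_hat_eq_Min using finite_gamma_argmin k by (rule Min_le)
  moreover have "k \<le> beta_hat u"
    unfolding beta_hat_eq_Max using finite_gamma_argmin k by (rule Max_ge)
  moreover from calculation have "even (k - alpha_hat u)"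
    by presburger
  ultimately show "k \<in> parity_interval (alpha_hat u) (beta_hat u)"
    unfolding parity_interval_def by simp
next
  fix k assume k: "k \<in> parity_interval (alpha_hat u) (beta_hat u)"
  show "k \<in> gamma_argmin u"
  proof (cases "k = alpha_hat u \<or> k = beta_hat u")
    case True
    then show ?thesis
      using alpha_hat_mem_gamma_argmin beta_hat_mem_gamma_argmin by blast
  next
    case False
    have "beta_hat u \<le> card (hatTS u)"
      using beta_hat_mem_gamma_argmin unfolding gamma_argmin_def by blast
    then have "alpha_hat u < k" "k < beta_hat u" "even (k - alpha_hat u)" "k \<le> card (hatTS u)"
      using k False unfolding parity_interval_def by auto
    moreover from this(4) have "alpha_hat u < k \<and> k < beta_hat u \<longrightarrow>
        gamma_hat u k = (if even (k - alpha_hat u) then min_hat u else min_hat u + 1)"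
      using assms(2) unfolding property_P_def by blast
    ultimately show ?thesis
      unfolding gamma_argmin_def by simp
  qed
qed

lemma card_hatTS_TrueTwin:
  "distinct (leaf_list (Node TrueTwin l r)) \<Longrightarrow> card (hatTS (Node TrueTwin l r)) = card (hatTS l) + card (hatTS r)"
proof -
  assume "distinct (leaf_list (Node TrueTwin l r))"
  then have "hatTS l \<inter> hatTS r = {}"
    using disjoint_hatV_children hatTS_subset_hatV[of l] hatTS_subset_hatV[of r] by blast
  then show ?thesis
    by (simp add: card_Un_disjoint finite_hatTS)
qed

lemma gamma_hat_TrueTwin_split:
  assumes "distinct (leaf_list (Node TrueTwin l r))" "gamma_hat (Node TrueTwin l r) k \<noteq> \<infinity>"
  shows "\<exists>a b c. k = a + b \<and> a + c \<le> card (hatTS l) \<and> b + c \<le> card (hatTS r) \<and>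
           gamma_hat l (a + c) + gamma_hat r (b + c) \<le> gamma_hat (Node TrueTwin l r) k"
proof -
  interpret true_twin_join "hatV l" "hatE l" "hatTS l" "hatV r" "hatE r" "hatTS r"
    using assms(1) by (rule true_twin_join_children)
  obtain S where S: "k_feasible (Node TrueTwin l r) k S" "gamma_hat (Node TrueTwin l r) k = enat (card S)"
    using assms(2) by (rule gamma_hat_attained)
  obtain a b c where "k = a + b"
    and Sl: "k_feasible l (a + c) (S \<inter> hatV l)" and Sr: "k_feasible r (b + c) (S \<inter> hatV r)"
    using twin_feasible_split[OF S(1)[unfolded k_feasible_TrueTwin_iff]]
    unfolding k_feasible_iff_twin_feasible by blast
  have "a + c \<le> card (hatTS l)" "b + c \<le> card (hatTS r)"
    using Sl Sr twin_feasible_le_card finite_hatTS unfolding k_feasible_iff_twin_feasible by blast+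
  moreover have "card S = card (S \<inter> hatV l) + card (S \<inter> hatV r)"
  proof -
    have "S \<inter> hatV l \<union> S \<inter> hatV r = S"
      using S(1) unfolding k_feasible_TrueTwin_iff twin_feasible_def by blast
    moreover have "card (S \<inter> hatV l \<union> S \<inter> hatV r) = card (S \<inter> hatV l) + card (S \<inter> hatV r)"
      using finite_V1 finite_V2 disjoint by (intro card_Un_disjoint) auto
    ultimately show ?thesis
      by simp
  qed
  then have "gamma_hat l (a + c) + gamma_hat r (b + c) \<le> gamma_hat (Node TrueTwin l r) k"
    using add_mono[OF gamma_hat_le[OF Sl] gamma_hat_le[OF Sr]] S(2) by simp
  ultimately show ?thesis
    using \<open>k = a + b\<close> by blast
qed

lemma gamma_hat_TrueTwin_combine:
  assumes "distinct (leaf_list (Node TrueTwin l r))"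
  shows "gamma_hat (Node TrueTwin l r) (nat \<bar>int kl - int kr\<bar>) \<le> gamma_hat l kl + gamma_hat r kr"
proof (cases "gamma_hat l kl = \<infinity> \<or> gamma_hat r kr = \<infinity>")
  case True
  then show ?thesis
    by auto
next
  case False
  interpret true_twin_join "hatV l" "hatE l" "hatTS l" "hatV r" "hatE r" "hatTS r"
    using assms by (rule true_twin_join_children)
  obtain Sl where Sl: "k_feasible l kl Sl" "gamma_hat l kl = enat (card Sl)"
    using False gamma_hat_attained by metis
  obtain Sr where Sr: "k_feasible r kr Sr" "gamma_hat r kr = enat (card Sr)"
    using False gamma_hat_attained by metis
  have "k_feasible (Node TrueTwin l r) (nat \<bar>int kl - int kr\<bar>) (Sl \<union> Sr)"
    unfolding k_feasible_TrueTwin_iff using twin_feasible_combine Sl(1) Sr(1)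
    unfolding k_feasible_iff_twin_feasible by blast
  moreover have "card (Sl \<union> Sr) = card Sl + card Sr"
    using Sl(1) Sr(1) finite_V1 finite_V2 disjoint
    unfolding k_feasible_iff_twin_feasible twin_feasible_def
    by (intro card_Un_disjoint) (auto intro: finite_subset)
  ultimately show ?thesis
    using gamma_hat_le Sl(2) Sr(2) by fastforce
qed

lemma min_hat_TrueTwin_le_gamma_hat:
  assumes "distinct (leaf_list (Node TrueTwin l r))"
  shows "min_hat l + min_hat r \<le> gamma_hat (Node TrueTwin l r) k"
proof (cases "gamma_hat (Node TrueTwin l r) k = \<infinity>")
  case False
  then obtain a b c where "a + c \<le> card (hatTS l)" "b + c \<le> card (hatTS r)"
    and "gamma_hat l (a + c) + gamma_hat r (b + c) \<le> gamma_hat (Node TrueTwin l r) k"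
    using gamma_hat_TrueTwin_split[OF assms] by blast
  then show ?thesis
    using add_mono[OF min_hat_le_gamma_hat min_hat_le_gamma_hat] order_trans by blast
qed simp

lemma gamma_hat_TrueTwin_dist_le:
  assumes "distinct (leaf_list (Node TrueTwin l r))" "kl \<in> gamma_argmin l" "kr \<in> gamma_argmin r"
  shows "nat \<bar>int kl - int kr\<bar> \<le> card (hatTS (Node TrueTwin l r))"
    and "gamma_hat (Node TrueTwin l r) (nat \<bar>int kl - int kr\<bar>) \<le> min_hat l + min_hat r"
proof -
  show "nat \<bar>int kl - int kr\<bar> \<le> card (hatTS (Node TrueTwin l r))"
    using assms(2,3) card_hatTS_TrueTwin[OF assms(1)]
    unfolding gamma_argmin_def by (auto simp: nat_abs_int_diff)
  show "gamma_hat (Node TrueTwin l r) (nat \<bar>int kl - int kr\<bar>) \<le> min_hat l + min_hat r"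
    using gamma_hat_TrueTwin_combine[OF assms(1), of kl kr] assms(2,3)
    unfolding gamma_argmin_def by simp
qed

lemma min_hat_TrueTwin:
  assumes "distinct (leaf_list (Node TrueTwin l r))"
  shows "min_hat (Node TrueTwin l r) = min_hat l + min_hat r"
proof (rule antisym)
  show "min_hat (Node TrueTwin l r) \<le> min_hat l + min_hat r"
    using gamma_hat_TrueTwin_dist_le[OF assms alpha_hat_mem_gamma_argmin alpha_hat_mem_gamma_argmin]
      min_hat_le_gamma_hat order_trans by blast
  have "min_hat (Node TrueTwin l r) \<in> gamma_hat (Node TrueTwin l r) ` {0..card (hatTS (Node TrueTwin l r))}"
    unfolding min_hat_def by (rule Min_in) auto
  then show "min_hat l + min_hat r \<le> min_hat (Node TrueTwin l r)"
    using min_hat_TrueTwin_le_gamma_hat[OF assms] by auto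
qed

lemma dist_mem_gamma_argmin_TrueTwin:
  assumes "distinct (leaf_list (Node TrueTwin l r))" "kl \<in> gamma_argmin l" "kr \<in> gamma_argmin r"
  shows "nat \<bar>int kl - int kr\<bar> \<in> gamma_argmin (Node TrueTwin l r)"
  using gamma_hat_TrueTwin_dist_le[OF assms] min_hat_TrueTwin[OF assms(1)]
    min_hat_le_gamma_hat[of "nat \<bar>int kl - int kr\<bar>" "Node TrueTwin l r"]
  unfolding gamma_argmin_def by simp

lemma gamma_argmin_TrueTwin_ge_dist:
  assumes "distinct (leaf_list (Node TrueTwin l r))" "k \<in> gamma_argmin (Node TrueTwin l r)"
  shows "\<exists>kl\<in>gamma_argmin l. \<exists>kr\<in>gamma_argmin r. nat \<bar>int kl - int kr\<bar> \<le> k"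
proof -
  have "distinct (leaf_list l)" "distinct (leaf_list r)"
    using assms(1) by simp_all
  then obtain ml mr where ml: "min_hat l = enat ml" and mr: "min_hat r = enat mr"
    using min_hat_finite by blast
  have opt: "gamma_hat (Node TrueTwin l r) k = enat (ml + mr)"
    using assms(2) min_hat_TrueTwin[OF assms(1)] ml mr unfolding gamma_argmin_def by simp
  then obtain a b c where "k = a + b" and le: "a + c \<le> card (hatTS l)" "b + c \<le> card (hatTS r)"
    and sum_le: "gamma_hat l (a + c) + gamma_hat r (b + c) \<le> enat (ml + mr)"
    using gamma_hat_TrueTwin_split[OF assms(1)] by fastforce
  have "enat ml \<le> gamma_hat l (a + c)" "enat mr \<le> gamma_hat r (b + c)"
    using min_hat_le_gamma_hat le ml mr by metis+
  with sum_le have "gamma_hat l (a + c) = enat ml" "gamma_hat r (b + c) = enat mr"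
    by (cases "gamma_hat l (a + c)"; cases "gamma_hat r (b + c)"; simp)+
  then have "a + c \<in> gamma_argmin l" "b + c \<in> gamma_argmin r"
    using le ml mr unfolding gamma_argmin_def by simp_all
  moreover have "nat \<bar>int (a + c) - int (b + c)\<bar> \<le> k"
    using \<open>k = a + b\<close> by linarith
  ultimately show ?thesis
    by blast
qed

lemma alpha_hat_TrueTwin:
  assumes "distinct (leaf_list (Node TrueTwin l r))"
  shows "alpha_hat (Node TrueTwin l r) =
    Min {nat \<bar>int kl - int kr\<bar> | kl kr. kl \<in> gamma_argmin l \<and> kr \<in> gamma_argmin r}"
    (is "_ = Min ?D")
proof (rule antisym)
  have fin: "finite ?D"
    by (rule finite_image_set2) (simp_all add: finite_gamma_argmin)
  have "nat \<bar>int (alpha_hat l) - int (alpha_hat r)\<bar> \<in> ?D"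
    using alpha_hat_mem_gamma_argmin by blast
  then have "Min ?D \<in> ?D"
    using fin by (intro Min_in) auto
  then obtain kl kr where "kl \<in> gamma_argmin l" "kr \<in> gamma_argmin r" "Min ?D = nat \<bar>int kl - int kr\<bar>"
    by blast
  then have "Min ?D \<in> gamma_argmin (Node TrueTwin l r)"
    using dist_mem_gamma_argmin_TrueTwin[OF assms] by simp
  then show "alpha_hat (Node TrueTwin l r) \<le> Min ?D"
    unfolding alpha_hat_eq_Min using finite_gamma_argmin by (rule Min_le[rotated])
  obtain kl kr where "kl \<in> gamma_argmin l" "kr \<in> gamma_argmin r"
    and le: "nat \<bar>int kl - int kr\<bar> \<le> alpha_hat (Node TrueTwin l r)"
    using gamma_argmin_TrueTwin_ge_dist[OF assms alpha_hat_mem_gamma_argmin] by blast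
  then have "Min ?D \<le> nat \<bar>int kl - int kr\<bar>"
    using fin by (intro Min_le) blast+
  then show "Min ?D \<le> alpha_hat (Node TrueTwin l r)"
    using le by (rule order_trans)
qed

section \<open>Distances between parity intervals\<close>

lemma nat_abs_int_diff_mod_2: "nat \<bar>int a - int b\<bar> mod 2 = (if even (a + b) then 0 else 1)"
  by (auto simp: mod2_eq_if nat_abs_int_diff)

lemma dist_parity_intervals_lower_bound:
  assumes "k \<in> parity_interval a b" "l \<in> parity_interval c d"
  shows "(if a > d then a - d else if c > b then c - b else nat \<bar>int a - int c\<bar> mod 2) \<le> nat \<bar>int k - int l\<bar>"
proof -
  have kl: "a \<le> k" "k \<le> b" "even (k - a)" "c \<le> l" "l \<le> d" "even (l - c)"
    using assms unfolding parity_interval_def by auto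
  consider "d < a" | "\<not> d < a" "b < c" | "\<not> d < a" "\<not> b < c" "k = l" | "\<not> d < a" "\<not> b < c" "k \<noteq> l"
    by blast
  then show ?thesis
  proof cases
    case 3
    then have "even (a + c)"
      using kl by auto
    then show ?thesis
      using 3 by (simp add: nat_abs_int_diff_mod_2)
  next
    case 4
    then have "1 \<le> nat \<bar>int k - int l\<bar>"
      by (auto simp: nat_abs_int_diff)
    moreover have "nat \<bar>int a - int c\<bar> mod 2 \<le> 1"
      by (simp add: mod2_eq_if)
    ultimately show ?thesis
      using 4 by simp
  qed (use kl in \<open>simp_all add: nat_abs_int_diff\<close>)
qed

lemma dist_parity_intervals_attained_overlapping:
  assumes "a \<le> b" "even (b - a)" "c \<le> d" "even (d - c)" "a \<le> d" "c \<le> b"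
  shows "\<exists>k\<in>parity_interval a b. \<exists>l\<in>parity_interval c d. nat \<bar>int k - int l\<bar> = nat \<bar>int a - int c\<bar> mod 2"
proof -
  have "a \<noteq> c" if "odd (a + c)"
    using that by auto
  then consider "even (a + c)" | "a < c" "odd (a + c)" | "c < a" "odd (a + c)"
    using linorder_neqE_nat by blast
  then show ?thesis
  proof cases
    case 1
    show ?thesis
      by (rule bexI[of _ "max a c"], rule bexI[of _ "max a c"])
        (use 1 assms in \<open>auto simp: parity_interval_def nat_abs_int_diff_mod_2 max_def\<close>)
  next
    case 2
    have "c - 1 \<in> parity_interval a b" "c \<in> parity_interval c d"
      using 2 assms unfolding parity_interval_def by auto
    moreover have "nat \<bar>int (c - 1) - int c\<bar> = nat \<bar>int a - int c\<bar> mod 2"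
      unfolding nat_abs_int_diff_mod_2 using 2 by auto
    ultimately show ?thesis
      by blast
  next
    case 3
    have "a \<in> parity_interval a b" "a - 1 \<in> parity_interval c d"
      using 3 assms unfolding parity_interval_def by auto
    moreover have "nat \<bar>int a - int (a - 1)\<bar> = nat \<bar>int a - int c\<bar> mod 2"
      unfolding nat_abs_int_diff_mod_2 using 3 by auto
    ultimately show ?thesis
      by blast
  qed
qed

lemma dist_parity_intervals_attained:
  assumes "a \<le> b" "even (b - a)" "c \<le> d" "even (d - c)"
  shows "\<exists>k\<in>parity_interval a b. \<exists>l\<in>parity_interval c d.
    nat \<bar>int k - int l\<bar> = (if a > d then a - d else if c > b then c - b else nat \<bar>int a - int c\<bar> mod 2)"
proof -
  consider "d < a" | "b < c" | "a \<le> d" "c \<le> b"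
    by linarith
  then show ?thesis
  proof cases
    case 1
    show ?thesis
      by (rule bexI[of _ a], rule bexI[of _ d]) (use 1 assms in \<open>auto simp: parity_interval_def\<close>)
  next
    case 2
    show ?thesis
      by (rule bexI[of _ b], rule bexI[of _ c]) (use 2 assms in \<open>auto simp: parity_interval_def\<close>)
  next
    case 3
    then show ?thesis
      using dist_parity_intervals_attained_overlapping[OF assms] by simp
  qed
qed

lemma Min_dist_parity_intervals:
  assumes "a \<le> b" "even (b - a)" "c \<le> d" "even (d - c)"
  shows "Min {nat \<bar>int k - int l\<bar> | k l. k \<in> parity_interval a b \<and> l \<in> parity_interval c d} =
    (if a > d then a - d else if c > b then c - b else nat \<bar>int a - int c\<bar> mod 2)"
    (is "Min ?D = ?f")
proof (rule Min_eqI)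
  have "finite (parity_interval a b)" "finite (parity_interval c d)"
    unfolding parity_interval_def by simp_all
  then show "finite ?D"
    using finite_image_set2[of "\<lambda>k. k \<in> parity_interval a b" "\<lambda>l. l \<in> parity_interval c d"] by simp
  show "?f \<le> y" if "y \<in> ?D" for y
    using that dist_parity_intervals_lower_bound by blast
  obtain k l where "k \<in> parity_interval a b" "l \<in> parity_interval c d" "nat \<bar>int k - int l\<bar> = ?f"
    using dist_parity_intervals_attained[OF assms] by blast
  then show "?f \<in> ?D"
    by (intro CollectI exI conjI) (rule sym)
qed

theorem lemma8:
  fixes T v vl vr :: "'a dtree" and V :: "'a set" and E :: "'a set set"
  assumes "decomposition_tree T V E"
    and "distance_hereditary V E"
    and "v \<in> subtrees T"
    and "v = Node TrueTwin vl vr"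
    and "property_P vl" and "property_P vr"
  shows "alpha_hat v =
    (if alpha_hat vl > beta_hat vr then alpha_hat vl - beta_hat vr
     else if alpha_hat vr > beta_hat vl then alpha_hat vr - beta_hat vl
     else nat \<bar>int (alpha_hat vl) - int (alpha_hat vr)\<bar> mod 2)"
proof -
  have distinct: "distinct (leaf_list (Node TrueTwin vl vr))"
    using assms(1,3,4) distinct_leaf_list_subtree unfolding decomposition_tree_def by blast
  then have argmin: "gamma_argmin vl = parity_interval (alpha_hat vl) (beta_hat vl)"
    "gamma_argmin vr = parity_interval (alpha_hat vr) (beta_hat vr)"
    using assms(5,6) gamma_argmin_eq_parity_interval by auto
  have "alpha_hat vl \<le> beta_hat vl" "even (beta_hat vl - alpha_hat vl)"
    "alpha_hat vr \<le> beta_hat vr" "even (beta_hat vr - alpha_hat vr)"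
    using beta_hat_mem_gamma_argmin[of vl] beta_hat_mem_gamma_argmin[of vr] argmin
    unfolding parity_interval_def by auto
  then show ?thesis
    using alpha_hat_TrueTwin[OF distinct] Min_dist_parity_intervals assms(4) argmin by simp
qed

end
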